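(* Let $\kappa>0$ and $f\in\mathcal{D}(\mathbb{R})$. Then for all $\lambda\in\mathbb{R}$, $$\mathcal{F}_\kappa(f)(\lambda)=\int_{\mathbb{R}}f(x)\,\mathbf{M}_\kappa(i\lambda x)\,dx=\int_{\mathbb{R}}\big({}^t\chi_\kappa f\big)(x)\,e^{i\lambda x}\,dx,$$ i.e. $\mathcal{F}_\kappa(f)=\mathcal{F}\circ{}^t\chi_\kappa(f)$.
   Context: $\mathcal{D}(\mathbb{R})$ is the space of compactly supported $C^\infty$ functions on $\mathbb{R}$. $\mathbf{M}_\kappa(z)=\sum_{n=0}^\infty\frac{z^n}{\Gamma(\kappa+1+n)}$. The Kummer transform is $\mathcal{F}_\kappa(f)(\lambda)=\int_{\mathbb{R}}f(x)\mathbf{M}_\kappa(i\lambda x)\,dx$, and $\mathcal{F}(g)(\lambda)=\int_{\mathbb{R}}g(x)e^{i\lambda x}\,dx$ is the Fourier transform. The dual intertwining operator is defined for $x\in\mathbb{R}\setminus\{0\}$ by $\big({}^t\chi_\kappa f\big)(x)=\frac{1}{\Gamma(\kappa)}\int_{|x|}^{+\infty}(t-|x|)^{\kappa-1}t^{-\kappa}f(\operatorname{sgn}(x)\,t)\,dt$. *)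

theory Defs
  imports "HOL-Analysis.Analysis"
begin

fun vderiv_iter :: "nat \<Rightarrow> (real \<Rightarrow> complex) \<Rightarrow> real \<Rightarrow> complex" where
  "vderiv_iter 0 f = f"
| "vderiv_iter (Suc n) f = (\<lambda>x. vector_derivative (vderiv_iter n f) (at x))"

definition test_function :: "(real \<Rightarrow> complex) \<Rightarrow> bool" where
  "test_function f \<longleftrightarrow>
     (\<forall>n x. vderiv_iter n f differentiable (at x)) \<and>
     compact (closure {x. f x \<noteq> 0})"

definition kummerM :: "real \<Rightarrow> complex \<Rightarrow> complex" where
  "kummerM \<kappa> z = (\<Sum>n. z ^ n / Gamma (complex_of_real (\<kappa> + 1 + real n)))"

definition kummer_transform :: "real \<Rightarrow> (real \<Rightarrow> complex) \<Rightarrow> real \<Rightarrow> complex" where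
  "kummer_transform \<kappa> f lam =
     (LINT x|lborel. f x * kummerM \<kappa> (\<i> * complex_of_real (lam * x)))"

definition fourier_transform :: "(real \<Rightarrow> complex) \<Rightarrow> real \<Rightarrow> complex" where
  "fourier_transform g lam = (LINT x|lborel. g x * cis (lam * x))"

text \<open>The dual intertwining operator; defined for x \<noteq> 0 (value at 0 is
  irrelevant for integration and set to 0).\<close>
definition dual_intertwining :: "real \<Rightarrow> (real \<Rightarrow> complex) \<Rightarrow> real \<Rightarrow> complex" where
  "dual_intertwining \<kappa> f x =
     (if x = 0 then 0 else
        complex_of_real (1 / Gamma \<kappa>) *
        (LINT t:{\<bar>x\<bar><..}|lborel.
            complex_of_real ((t - \<bar>x\<bar>) powr (\<kappa> - 1) * t powr (- \<kappa>)) * f (sgn x * t)))"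

end

theory Submission
  imports Defs
begin

text \<open>Both integrals split into the half-lines \<open>x > 0\<close> and \<open>x < 0\<close>, and the second reduces
  to the first by reflecting \<open>f\<close> and \<open>\<lambda>\<close>. On \<open>x > 0\<close>, Fubini turns the Fourier integral
  of the dual intertwining operator into
  \<open>\<integral>\<^sub>0\<^sup>\<infinity> f(t) t\<^sup>-\<^sup>\<kappa>/\<Gamma>(\<kappa>) (\<integral>\<^sub>0\<^sup>t (t - x)\<^sup>\<kappa>\<^sup>-\<^sup>1 exp(i\<lambda>x) dx) dt\<close>.
  The substitution \<open>x = t s\<close> and term-wise integration of the exponential series against
  Beta integrals give \<open>\<integral>\<^sub>0\<^sup>t (t - x)\<^sup>\<kappa>\<^sup>-\<^sup>1 exp(i\<lambda>x) dx = \<Gamma>(\<kappa>) t\<^sup>\<kappa> M\<^sub>\<kappa>(i\<lambda>t)\<close>.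
  The double integral converges absolutely because \<open>\<integral>\<^sub>0\<^sup>t (t - x)\<^sup>\<kappa>\<^sup>-\<^sup>1 dx = t\<^sup>\<kappa>/\<kappa>\<close>
  cancels the weight \<open>t\<^sup>-\<^sup>\<kappa>\<close>.\<close>

lemma lborel_integral_split_reflect:
  fixes g :: "real \<Rightarrow> 'a::{banach, second_countable_topology}"
  assumes pos: "set_integrable lborel {0<..} g" and neg: "set_integrable lborel {0<..} (\<lambda>x. g (- x))"
  shows "integrable lborel g"
    and "integral\<^sup>L lborel g = (LINT x:{0<..}|lborel. g x) + (LINT x:{0<..}|lborel. g (- x))"
proof -
  have neg_int: "set_integrable lborel {..<0} g"
    using neg lborel_integrable_real_affine_iff[of "-1" "\<lambda>x. indicator {..<0} x *\<^sub>R g x" 0]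
    by (simp add: set_integrable_def indicator_def)
  have neg_val: "(LINT x:{..<0}|lborel. g x) = (LINT x:{0<..}|lborel. g (- x))"
    by (subst set_integral_reflect) (simp add: greaterThan_def)
  have union_int: "set_integrable lborel ({..<0} \<union> {0<..}) g"
    using neg_int pos by (rule set_integrable_Un) simp_all
  have at_zero_int: "integrable lborel (\<lambda>x. indicator {0} x *\<^sub>R g 0)"
    by (intro integrable_scaleR_left integrable_real_indicator) auto
  have split: "g = (\<lambda>x. indicator ({..<0} \<union> {0<..}) x *\<^sub>R g x + indicator {0} x *\<^sub>R g 0)"
    by (auto simp: indicator_def fun_eq_iff)
  show "integrable lborel g"
    using union_int at_zero_int unfolding set_integrable_def by (subst split) (rule Bochner_Integration.integrable_add)
  have "integral\<^sup>L lborel g = (LINT x:{..<0} \<union> {0<..}|lborel. g x)"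
    using union_int at_zero_int unfolding set_integrable_def set_lebesgue_integral_def
    by (subst split) simp
  also have "\<dots> = (LINT x:{..<0}|lborel. g x) + (LINT x:{0<..}|lborel. g x)"
    using neg_int pos by (intro set_integral_Un) auto
  finally show "integral\<^sup>L lborel g = (LINT x:{0<..}|lborel. g x) + (LINT x:{0<..}|lborel. g (- x))"
    by (simp add: neg_val add.commute)
qed

lemma set_integral_Beta_moment:
  fixes \<kappa> :: real
  assumes "\<kappa> > 0"
  shows "set_integrable lborel {0<..<1} (\<lambda>s. (1 - s) powr (\<kappa> - 1) * s ^ n)"
    and "(LINT s:{0<..<1}|lborel. (1 - s) powr (\<kappa> - 1) * s ^ n) = Gamma \<kappa> * fact n / Gamma (\<kappa> + real n + 1)"
proof -
  let ?B = "\<lambda>s. s powr (real (Suc n) - 1) * (1 - s) powr (\<kappa> - 1)"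
  have eq: "?B s = (1 - s) powr (\<kappa> - 1) * s ^ n" if "s \<in> {0<..<1}" for s
    using that by (simp add: powr_realpow mult.commute)
  have int: "set_integrable lborel {0<..<1} ?B"
    by (rule set_integrable_subset[OF integrable_Beta]) (use assms in auto)
  then show "set_integrable lborel {0<..<1} (\<lambda>s. (1 - s) powr (\<kappa> - 1) * s ^ n)"
    using set_integrable_cong[of lborel lborel "{0<..<1}" "{0<..<1}" ?B] eq by presburger
  have "(LINT s:{0<..<1}|lborel. (1 - s) powr (\<kappa> - 1) * s ^ n) = (LINT s:{0<..<1}|lborel. ?B s)"
    using eq by (intro set_lebesgue_integral_cong) auto
  also have "\<dots> = integral {0<..<1} ?B"
    by (rule set_borel_integral_eq_integral(2)[OF int])
  also have "\<dots> = Beta (real (Suc n)) \<kappa>"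
    using has_integral_Beta_real[of "real (Suc n)" \<kappa>] assms
    by (simp add: has_integral_Icc_iff_Ioo integral_unique)
  also have "\<dots> = Gamma \<kappa> * fact n / Gamma (\<kappa> + real n + 1)"
    using Gamma_fact[of n, where 'a=real] by (simp add: Beta_def add_ac)
  finally show "(LINT s:{0<..<1}|lborel. (1 - s) powr (\<kappa> - 1) * s ^ n) = Gamma \<kappa> * fact n / Gamma (\<kappa> + real n + 1)" .
qed

lemma kummerM_integral_representation:
  fixes \<kappa> z :: real
  assumes "\<kappa> > 0"
  shows "set_integrable lborel {0<..<1} (\<lambda>s. (1 - s) powr (\<kappa> - 1) *\<^sub>R cis (z * s))"
    and "(LINT s:{0<..<1}|lborel. (1 - s) powr (\<kappa> - 1) *\<^sub>R cis (z * s))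
           = Gamma \<kappa> *\<^sub>R kummerM \<kappa> (\<i> * complex_of_real z)"
proof -
  define g where "g n s = indicator {0<..<1} s * ((1 - s) powr (\<kappa> - 1) * s ^ n)" for n s
  define F where "F n s = g n s *\<^sub>R ((\<i> * complex_of_real z) ^ n /\<^sub>R fact n)" for n s
  have g_int: "integrable lborel (g n)" and g_val: "integral\<^sup>L lborel (g n) = Gamma \<kappa> * fact n / Gamma (\<kappa> + real n + 1)" for n
    using set_integral_Beta_moment[OF assms, of n]
    unfolding g_def set_integrable_def set_lebesgue_integral_def by simp_all
  have g_nonneg: "g n s \<ge> 0" for n s
    by (simp add: g_def indicator_def)
  have F_int: "integrable lborel (F n)" for n
    unfolding F_def using g_int by simp
  have norm_F: "norm (F n s) = g n s * (\<bar>z\<bar> ^ n / fact n)" for n s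
    using g_nonneg[of n s] by (simp add: F_def norm_mult norm_power divide_inverse)
  have summable_norm_integrals: "summable (\<lambda>n. \<integral>s. norm (F n s) \<partial>lborel)"
  proof (rule summable_comparison_test')
    show "summable (\<lambda>n. integral\<^sup>L lborel (g 0) * (\<bar>z\<bar> ^ n / fact n))"
      using summable_exp[of "\<bar>z\<bar>"] by (intro summable_mult) (simp add: divide_inverse mult.commute)
    fix n
    have "integral\<^sup>L lborel (g n) \<le> integral\<^sup>L lborel (g 0)"
      using g_int by (intro integral_mono) (auto simp: g_def indicator_def power_le_one intro!: mult_left_mono)
    moreover have "integral\<^sup>L lborel (g n) \<ge> 0"
      using g_nonneg by (intro integral_nonneg_AE) auto
    ultimately show "norm (\<integral>s. norm (F n s) \<partial>lborel) \<le> integral\<^sup>L lborel (g 0) * (\<bar>z\<bar> ^ n / fact n)"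
      unfolding norm_F by (simp add: divide_right_mono mult_right_mono)
  qed
  have F_sums: "(\<lambda>n. F n s) sums (indicator {0<..<1} s *\<^sub>R ((1 - s) powr (\<kappa> - 1) *\<^sub>R cis (z * s)))" for s
  proof -
    have F_eq: "(\<lambda>n. F n s) = (\<lambda>n. indicator {0<..<1} s *\<^sub>R (1 - s) powr (\<kappa> - 1) *\<^sub>R ((\<i> * complex_of_real (z * s)) ^ n /\<^sub>R fact n))"
      by (simp add: F_def g_def power_mult_distrib scaleR_conv_of_real mult_ac)
    show ?thesis
      unfolding F_eq cis_conv_exp by (intro sums_scaleR_right exp_converges)
  qed
  have summable_norm_F: "AE s in lborel. summable (\<lambda>n. norm (F n s))"
  proof (rule AE_I2)
    fix s
    have "norm (F n s) = (indicator {0<..<1} s * (1 - s) powr (\<kappa> - 1)) * norm ((z * s) ^ n /\<^sub>R fact n)" for n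
      unfolding norm_F by (simp add: g_def indicator_def abs_mult power_mult_distrib power_abs divide_inverse)
    then show "summable (\<lambda>n. norm (F n s))"
      using summable_norm_exp[of "z * s"] by (simp add: summable_mult)
  qed
  have F_integral: "integral\<^sup>L lborel (F n) = Gamma \<kappa> *\<^sub>R ((\<i> * complex_of_real z) ^ n / Gamma (complex_of_real (\<kappa> + 1 + real n)))" for n
  proof -
    have "Gamma (\<kappa> + real n + 1) \<noteq> 0"
      using assms by (intro Gamma_real_pos[THEN less_imp_neq, symmetric]) simp
    moreover have "Gamma (complex_of_real (\<kappa> + 1 + real n)) = complex_of_real (Gamma (\<kappa> + real n + 1))"
      by (subst Gamma_complex_of_real) (simp add: add_ac)
    moreover have "integral\<^sup>L lborel (F n) = integral\<^sup>L lborel (g n) *\<^sub>R ((\<i> * complex_of_real z) ^ n /\<^sub>R fact n)"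
      unfolding F_def using g_int by simp
    ultimately show ?thesis
      by (simp add: g_val scaleR_conv_of_real field_simps)
  qed
  have "set_integrable lborel {0<..<1} (\<lambda>s. (1 - s) powr (\<kappa> - 1) *\<^sub>R cis (z * s)) \<and>
      (LINT s:{0<..<1}|lborel. (1 - s) powr (\<kappa> - 1) *\<^sub>R cis (z * s)) = (\<Sum>n. integral\<^sup>L lborel (F n))"
    using integrable_suminf[OF F_int summable_norm_F summable_norm_integrals]
      integral_suminf[OF F_int summable_norm_F summable_norm_integrals]
    unfolding set_integrable_def set_lebesgue_integral_def F_sums[THEN sums_unique, symmetric] by simp
  moreover have "(\<Sum>n. integral\<^sup>L lborel (F n)) = Gamma \<kappa> *\<^sub>R kummerM \<kappa> (\<i> * complex_of_real z)"
  proof -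
    have "summable (\<lambda>n. Gamma \<kappa> *\<^sub>R ((\<i> * complex_of_real z) ^ n / Gamma (complex_of_real (\<kappa> + 1 + real n))))"
      using summable_integral[OF F_int summable_norm_F summable_norm_integrals] by (simp only: F_integral)
    then have "summable (\<lambda>n. inverse (Gamma \<kappa>) *\<^sub>R Gamma \<kappa> *\<^sub>R ((\<i> * complex_of_real z) ^ n / Gamma (complex_of_real (\<kappa> + 1 + real n))))"
      by (rule summable_scaleR_right)
    then have "summable (\<lambda>n. (\<i> * complex_of_real z) ^ n / Gamma (complex_of_real (\<kappa> + 1 + real n)))"
      using Gamma_real_pos[OF assms] by simp
    then show ?thesis
      unfolding F_integral kummerM_def by (rule suminf_scaleR_right[symmetric])
  qed
  ultimately show "set_integrable lborel {0<..<1} (\<lambda>s. (1 - s) powr (\<kappa> - 1) *\<^sub>R cis (z * s))"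
    and "(LINT s:{0<..<1}|lborel. (1 - s) powr (\<kappa> - 1) *\<^sub>R cis (z * s))
           = Gamma \<kappa> *\<^sub>R kummerM \<kappa> (\<i> * complex_of_real z)"
    by simp_all
qed

lemma fractional_kernel_rescale:
  fixes g :: "real \<Rightarrow> 'a::{banach, second_countable_topology}" and \<kappa> t :: real
  assumes "t > 0"
  shows "set_integrable lborel {0<..<t} (\<lambda>x. (t - x) powr (\<kappa> - 1) *\<^sub>R g x) \<longleftrightarrow>
           set_integrable lborel {0<..<1} (\<lambda>s. (1 - s) powr (\<kappa> - 1) *\<^sub>R g (t * s))"
    and "(LINT x:{0<..<t}|lborel. (t - x) powr (\<kappa> - 1) *\<^sub>R g x)
           = t powr \<kappa> *\<^sub>R (LINT s:{0<..<1}|lborel. (1 - s) powr (\<kappa> - 1) *\<^sub>R g (t * s))"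
proof -
  define \<phi> where "\<phi> x = indicator {0<..<t} x *\<^sub>R (t - x) powr (\<kappa> - 1) *\<^sub>R g x" for x
  define \<psi> where "\<psi> s = indicator {0<..<1} s *\<^sub>R (1 - s) powr (\<kappa> - 1) *\<^sub>R g (t * s)" for s
  have \<phi>_scaled: "\<phi> (0 + t * s) = t powr (\<kappa> - 1) *\<^sub>R \<psi> s" for s
  proof (cases "0 < s \<and> s < 1")
    case True
    then have "(t - t * s) powr (\<kappa> - 1) = t powr (\<kappa> - 1) * (1 - s) powr (\<kappa> - 1)"
      using assms by (simp add: powr_mult[symmetric] right_diff_distrib)
    with True assms show ?thesis
      by (simp add: \<phi>_def \<psi>_def)
  next
    case False
    with assms show ?thesis
      by (auto simp: \<phi>_def \<psi>_def indicator_def mult_less_cancel_left2 zero_less_mult_iff)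
  qed
  have "integrable lborel (\<lambda>s. t powr (\<kappa> - 1) *\<^sub>R \<psi> s) \<longleftrightarrow> integrable lborel \<psi>"
    using integrable_scaleR_right[of "inverse (t powr (\<kappa> - 1))" lborel "\<lambda>s. t powr (\<kappa> - 1) *\<^sub>R \<psi> s"] assms
    by auto
  then have "integrable lborel \<phi> \<longleftrightarrow> integrable lborel \<psi>"
    using lborel_integrable_real_affine_iff[of t \<phi> 0] assms unfolding \<phi>_scaled by simp
  then show "set_integrable lborel {0<..<t} (\<lambda>x. (t - x) powr (\<kappa> - 1) *\<^sub>R g x) \<longleftrightarrow>
      set_integrable lborel {0<..<1} (\<lambda>s. (1 - s) powr (\<kappa> - 1) *\<^sub>R g (t * s))"
    unfolding set_integrable_def \<phi>_def \<psi>_def .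
  have "integral\<^sup>L lborel \<phi> = t *\<^sub>R t powr (\<kappa> - 1) *\<^sub>R integral\<^sup>L lborel \<psi>"
    using lborel_integral_real_affine[of t \<phi> 0] assms unfolding \<phi>_scaled by simp
  also have "t *\<^sub>R t powr (\<kappa> - 1) *\<^sub>R integral\<^sup>L lborel \<psi> = t powr \<kappa> *\<^sub>R integral\<^sup>L lborel \<psi>"
    using assms by (simp add: powr_diff)
  finally show "(LINT x:{0<..<t}|lborel. (t - x) powr (\<kappa> - 1) *\<^sub>R g x)
      = t powr \<kappa> *\<^sub>R (LINT s:{0<..<1}|lborel. (1 - s) powr (\<kappa> - 1) *\<^sub>R g (t * s))"
    unfolding set_lebesgue_integral_def \<phi>_def \<psi>_def .
qed

lemma fractional_kernel_integral:
  fixes \<kappa> t :: real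
  assumes "\<kappa> > 0" and "t > 0"
  shows "set_integrable lborel {0<..<t} (\<lambda>x. (t - x) powr (\<kappa> - 1))"
    and "(LINT x:{0<..<t}|lborel. (t - x) powr (\<kappa> - 1)) = t powr \<kappa> / \<kappa>"
proof -
  have "t powr \<kappa> * Gamma \<kappa> / Gamma (\<kappa> + 1) = t powr \<kappa> / \<kappa>"
  proof -
    have "\<kappa> \<notin> \<int>\<^sub>\<le>\<^sub>0"
      using assms(1) by (auto dest: nonpos_Ints_nonpos)
    then show ?thesis
      using Gamma_real_pos[OF assms(1)] by (simp add: Gamma_plus1)
  qed
  with set_integral_Beta_moment[OF assms(1), of 0]
    fractional_kernel_rescale[OF assms(2), of \<kappa> "\<lambda>_. 1::real"]
  show "set_integrable lborel {0<..<t} (\<lambda>x. (t - x) powr (\<kappa> - 1))"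
    and "(LINT x:{0<..<t}|lborel. (t - x) powr (\<kappa> - 1)) = t powr \<kappa> / \<kappa>"
    by simp_all
qed

lemma fractional_kernel_cis_integral:
  fixes \<kappa> t \<mu> :: real
  assumes "\<kappa> > 0" and "t > 0"
  shows "set_integrable lborel {0<..<t} (\<lambda>x. (t - x) powr (\<kappa> - 1) *\<^sub>R cis (\<mu> * x))"
    and "(LINT x:{0<..<t}|lborel. (t - x) powr (\<kappa> - 1) *\<^sub>R cis (\<mu> * x))
           = (t powr \<kappa> * Gamma \<kappa>) *\<^sub>R kummerM \<kappa> (\<i> * complex_of_real (\<mu> * t))"
  using kummerM_integral_representation[OF assms(1), of "\<mu> * t"]
    fractional_kernel_rescale[OF assms(2), of \<kappa> "\<lambda>x. cis (\<mu> * x)"]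
  by (simp_all add: mult.assoc)

definition dual_intertwining_half :: "real \<Rightarrow> (real \<Rightarrow> complex) \<Rightarrow> real \<Rightarrow> complex" where
  "dual_intertwining_half \<kappa> h x = complex_of_real (1 / Gamma \<kappa>) *
     (LINT t:{x<..}|lborel. complex_of_real ((t - x) powr (\<kappa> - 1) * t powr (- \<kappa>)) * h t)"

lemma dual_intertwining_eq_half:
  assumes "x > 0"
  shows "dual_intertwining \<kappa> f x = dual_intertwining_half \<kappa> f x"
    and "dual_intertwining \<kappa> f (- x) = dual_intertwining_half \<kappa> (\<lambda>t. f (- t)) x"
  using assms by (simp_all add: dual_intertwining_def dual_intertwining_half_def)

text \<open>For \<open>x > 0\<close>, \<open>dual_intertwining_half \<kappa> h x\<close> is the integral of
  \<open>dual_intertwining_kernel \<kappa> t x * h t\<close> over \<open>t\<close>; the kernel is what Fubini is applied to.\<close>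

definition dual_intertwining_kernel :: "real \<Rightarrow> real \<Rightarrow> real \<Rightarrow> real" where
  "dual_intertwining_kernel \<kappa> t x =
     (if 0 < x \<and> x < t then (t - x) powr (\<kappa> - 1) * t powr (- \<kappa>) / Gamma \<kappa> else 0)"

lemma dual_intertwining_kernel_nonneg: "\<kappa> > 0 \<Longrightarrow> dual_intertwining_kernel \<kappa> t x \<ge> 0"
  by (simp add: dual_intertwining_kernel_def)

lemma dual_intertwining_kernel_eq:
  assumes "t > 0"
  shows "dual_intertwining_kernel \<kappa> t x = t powr (- \<kappa>) / Gamma \<kappa> * (indicator {0<..<t} x * (t - x) powr (\<kappa> - 1))"
  using assms by (simp add: dual_intertwining_kernel_def indicator_def)

lemma integral_dual_intertwining_kernel:
  fixes \<kappa> \<mu> t :: real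
  assumes "\<kappa> > 0"
  shows "(\<integral>x. dual_intertwining_kernel \<kappa> t x \<partial>lborel) = indicator {0<..} t / (\<kappa> * Gamma \<kappa>)"
    and "integrable lborel (\<lambda>x. dual_intertwining_kernel \<kappa> t x *\<^sub>R cis (\<mu> * x))"
    and "(\<integral>x. dual_intertwining_kernel \<kappa> t x *\<^sub>R cis (\<mu> * x) \<partial>lborel)
           = indicator {0<..} t *\<^sub>R kummerM \<kappa> (\<i> * complex_of_real (\<mu> * t))"
proof -
  have Gamma_pos: "Gamma \<kappa> > 0"
    using assms by simp
  consider "t > 0" | "t \<le> 0" by linarith
  then have "(\<integral>x. dual_intertwining_kernel \<kappa> t x \<partial>lborel) = indicator {0<..} t / (\<kappa> * Gamma \<kappa>) \<and>
      integrable lborel (\<lambda>x. dual_intertwining_kernel \<kappa> t x *\<^sub>R cis (\<mu> * x)) \<and>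
      (\<integral>x. dual_intertwining_kernel \<kappa> t x *\<^sub>R cis (\<mu> * x) \<partial>lborel)
        = indicator {0<..} t *\<^sub>R kummerM \<kappa> (\<i> * complex_of_real (\<mu> * t))"
  proof cases
    case 1
    define c where "c = t powr (- \<kappa>) / Gamma \<kappa>"
    define \<phi> where "\<phi> x = indicator {0<..<t} x * (t - x) powr (\<kappa> - 1)" for x
    define \<psi> where "\<psi> x = indicator {0<..<t} x *\<^sub>R (t - x) powr (\<kappa> - 1) *\<^sub>R cis (\<mu> * x)" for x
    have \<phi>: "integrable lborel \<phi>" "integral\<^sup>L lborel \<phi> = t powr \<kappa> / \<kappa>"
      using fractional_kernel_integral[OF assms 1]
      unfolding \<phi>_def set_integrable_def set_lebesgue_integral_def by simp_all
    have \<psi>: "integrable lborel \<psi>" "integral\<^sup>L lborel \<psi> = (t powr \<kappa> * Gamma \<kappa>) *\<^sub>R kummerM \<kappa> (\<i> * complex_of_real (\<mu> * t))"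
      using fractional_kernel_cis_integral[OF assms 1, of \<mu>]
      unfolding \<psi>_def set_integrable_def set_lebesgue_integral_def by simp_all
    have c_scale: "c * t powr \<kappa> = 1 / Gamma \<kappa>"
      using 1 by (simp add: c_def powr_minus field_simps)
    have "dual_intertwining_kernel \<kappa> t = (\<lambda>x. c * \<phi> x)"
      using 1 by (simp add: c_def \<phi>_def dual_intertwining_kernel_eq fun_eq_iff)
    moreover have "(\<lambda>x. dual_intertwining_kernel \<kappa> t x *\<^sub>R cis (\<mu> * x)) = (\<lambda>x. c *\<^sub>R \<psi> x)"
      using 1 by (simp add: c_def \<psi>_def dual_intertwining_kernel_eq fun_eq_iff)
    ultimately show ?thesis
      using \<phi> \<psi> 1 Gamma_pos by (simp add: c_scale mult.assoc[symmetric])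
  next
    case 2
    then have "dual_intertwining_kernel \<kappa> t = (\<lambda>x. 0)"
      by (auto simp: dual_intertwining_kernel_def fun_eq_iff)
    with 2 show ?thesis
      by simp
  qed
  then show "(\<integral>x. dual_intertwining_kernel \<kappa> t x \<partial>lborel) = indicator {0<..} t / (\<kappa> * Gamma \<kappa>)"
    and "integrable lborel (\<lambda>x. dual_intertwining_kernel \<kappa> t x *\<^sub>R cis (\<mu> * x))"
    and "(\<integral>x. dual_intertwining_kernel \<kappa> t x *\<^sub>R cis (\<mu> * x) \<partial>lborel)
           = indicator {0<..} t *\<^sub>R kummerM \<kappa> (\<i> * complex_of_real (\<mu> * t))"
    by simp_all
qed

lemma integrable_dual_intertwining_kernel_product:
  fixes \<kappa> \<mu> :: real and h :: "real \<Rightarrow> complex"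
  assumes "\<kappa> > 0" and [measurable]: "h \<in> borel_measurable borel"
    and h_int: "set_integrable lborel {0<..} h"
  shows "integrable (lborel \<Otimes>\<^sub>M lborel) (\<lambda>(t, x). dual_intertwining_kernel \<kappa> t x *\<^sub>R (h t * cis (\<mu> * x)))"
    (is "integrable _ (case_prod ?F)")
proof (rule lborel_pair.Fubini_integrable)
  have [measurable]: "cis \<in> borel_measurable borel"
    by (intro borel_measurable_continuous_onI continuous_intros)
  show "case_prod ?F \<in> borel_measurable (lborel \<Otimes>\<^sub>M lborel)"
    unfolding dual_intertwining_kernel_def lborel_prod measurable_lborel2 borel_prod[symmetric] by measurable
  have "(\<integral>x. norm (dual_intertwining_kernel \<kappa> t x *\<^sub>R (h t * cis (\<mu> * x))) \<partial>lborel)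
      = norm (indicator {0<..} t *\<^sub>R h t) / (\<kappa> * Gamma \<kappa>)" for t
    using integral_dual_intertwining_kernel(1)[OF assms(1), of t] dual_intertwining_kernel_nonneg[OF assms(1)]
    by (simp add: norm_mult)
  moreover have "integrable lborel (\<lambda>t. norm (indicator {0<..} t *\<^sub>R h t) / (\<kappa> * Gamma \<kappa>))"
    using h_int unfolding set_integrable_def by (intro integrable_divide integrable_norm)
  ultimately show "integrable lborel (\<lambda>t. \<integral>x. norm (case_prod ?F (t, x)) \<partial>lborel)"
    by simp
  have "integrable lborel (\<lambda>x. h t * (dual_intertwining_kernel \<kappa> t x *\<^sub>R cis (\<mu> * x)))" for t
    using integral_dual_intertwining_kernel(2)[OF assms(1)] by (rule integrable_mult_right)
  then show "AE t in lborel. integrable lborel (\<lambda>x. case_prod ?F (t, x))"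
    by (simp add: mult.left_commute)
qed

lemma set_integral_dual_intertwining_half_cis:
  fixes \<kappa> \<mu> :: real and h :: "real \<Rightarrow> complex"
  assumes "\<kappa> > 0" and "h \<in> borel_measurable borel" and "set_integrable lborel {0<..} h"
  shows "set_integrable lborel {0<..} (\<lambda>x. dual_intertwining_half \<kappa> h x * cis (\<mu> * x))"
    and "set_integrable lborel {0<..} (\<lambda>t. h t * kummerM \<kappa> (\<i> * complex_of_real (\<mu> * t)))"
    and "(LINT x:{0<..}|lborel. dual_intertwining_half \<kappa> h x * cis (\<mu> * x))
           = (LINT t:{0<..}|lborel. h t * kummerM \<kappa> (\<i> * complex_of_real (\<mu> * t)))"
proof -
  define F where "F t x = dual_intertwining_kernel \<kappa> t x *\<^sub>R (h t * cis (\<mu> * x))" for t x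
  have F_int: "integrable (lborel \<Otimes>\<^sub>M lborel) (case_prod F)"
    unfolding F_def using integrable_dual_intertwining_kernel_product[OF assms] by simp
  have F_integral_x: "(\<integral>x. F t x \<partial>lborel) = indicator {0<..} t *\<^sub>R (h t * kummerM \<kappa> (\<i> * complex_of_real (\<mu> * t)))" for t
  proof -
    have "(\<integral>x. F t x \<partial>lborel) = h t * (\<integral>x. dual_intertwining_kernel \<kappa> t x *\<^sub>R cis (\<mu> * x) \<partial>lborel)"
      by (simp only: F_def mult_scaleR_right[symmetric] integral_mult_right_zero)
    then show ?thesis
      by (simp add: integral_dual_intertwining_kernel(3)[OF assms(1)] mult.left_commute)
  qed
  have F_integral_t: "(\<integral>t. F t x \<partial>lborel) = indicator {0<..} x *\<^sub>R (dual_intertwining_half \<kappa> h x * cis (\<mu> * x))" for x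
  proof (cases "x > 0")
    case True
    have "(\<lambda>t. F t x) = (\<lambda>t. (complex_of_real (1 / Gamma \<kappa>) * cis (\<mu> * x)) *
        (indicator {x<..} t *\<^sub>R (complex_of_real ((t - x) powr (\<kappa> - 1) * t powr (- \<kappa>)) * h t)))"
      using True by (auto simp: F_def dual_intertwining_kernel_def indicator_def scaleR_conv_of_real)
    then have "(\<integral>t. F t x \<partial>lborel) = (complex_of_real (1 / Gamma \<kappa>) * cis (\<mu> * x)) *
        (LINT t:{x<..}|lborel. complex_of_real ((t - x) powr (\<kappa> - 1) * t powr (- \<kappa>)) * h t)"
      by (simp only: integral_mult_right_zero set_lebesgue_integral_def)
    with True show ?thesis
      by (simp add: dual_intertwining_half_def mult_ac)
  qed (simp add: F_def dual_intertwining_kernel_def)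
  show "set_integrable lborel {0<..} (\<lambda>t. h t * kummerM \<kappa> (\<i> * complex_of_real (\<mu> * t)))"
    using lborel_pair.integrable_fst[OF F_int] by (simp add: F_integral_x set_integrable_def)
  show "set_integrable lborel {0<..} (\<lambda>x. dual_intertwining_half \<kappa> h x * cis (\<mu> * x))"
    using lborel_pair.integrable_snd[OF F_int] by (simp add: F_integral_t set_integrable_def)
  show "(LINT x:{0<..}|lborel. dual_intertwining_half \<kappa> h x * cis (\<mu> * x))
      = (LINT t:{0<..}|lborel. h t * kummerM \<kappa> (\<i> * complex_of_real (\<mu> * t)))"
    using lborel_pair.integral_snd[OF F_int] lborel_pair.integral_fst[OF F_int]
    by (simp add: F_integral_x F_integral_t set_lebesgue_integral_def)
qed

lemma fourier_transform_dual_intertwining_split: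
  fixes \<kappa> lam :: real and f :: "real \<Rightarrow> complex"
  assumes "set_integrable lborel {0<..} (\<lambda>x. dual_intertwining_half \<kappa> f x * cis (lam * x))"
    and "set_integrable lborel {0<..} (\<lambda>x. dual_intertwining_half \<kappa> (\<lambda>t. f (- t)) x * cis (- lam * x))"
  shows "fourier_transform (dual_intertwining \<kappa> f) lam
           = (LINT x:{0<..}|lborel. dual_intertwining_half \<kappa> f x * cis (lam * x))
           + (LINT x:{0<..}|lborel. dual_intertwining_half \<kappa> (\<lambda>t. f (- t)) x * cis (- lam * x))"
proof -
  let ?g = "\<lambda>x. dual_intertwining \<kappa> f x * cis (lam * x)"
  have "set_integrable lborel {0<..} ?g \<longleftrightarrow>
      set_integrable lborel {0<..} (\<lambda>x. dual_intertwining_half \<kappa> f x * cis (lam * x))"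
    and "set_integrable lborel {0<..} (\<lambda>x. ?g (- x)) \<longleftrightarrow>
      set_integrable lborel {0<..} (\<lambda>x. dual_intertwining_half \<kappa> (\<lambda>t. f (- t)) x * cis (- lam * x))"
    by (rule set_integrable_cong; simp add: dual_intertwining_eq_half)+
  with assms have "integral\<^sup>L lborel ?g = (LINT x:{0<..}|lborel. ?g x) + (LINT x:{0<..}|lborel. ?g (- x))"
    by (intro lborel_integral_split_reflect(2)) simp_all
  also have "\<dots> = (LINT x:{0<..}|lborel. dual_intertwining_half \<kappa> f x * cis (lam * x))
      + (LINT x:{0<..}|lborel. dual_intertwining_half \<kappa> (\<lambda>t. f (- t)) x * cis (- lam * x))"
    by (intro arg_cong2[where f = "(+)"] set_lebesgue_integral_cong) (simp_all add: dual_intertwining_eq_half)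
  finally show ?thesis
    unfolding fourier_transform_def .
qed

lemma kummer_transform_eq_fourier_dual_intertwining:
  fixes \<kappa> lam :: real and f :: "real \<Rightarrow> complex"
  assumes "\<kappa> > 0" and f_meas [measurable]: "f \<in> borel_measurable borel" and "integrable lborel f"
  shows "kummer_transform \<kappa> f lam = fourier_transform (dual_intertwining \<kappa> f) lam"
proof -
  define f' where "f' = (\<lambda>t. f (- t))"
  have f'_meas: "f' \<in> borel_measurable borel"
    unfolding f'_def by measurable
  have "integrable lborel f'"
    using assms(3) lborel_integrable_real_affine_iff[of "-1" f 0] unfolding f'_def by simp
  with assms(3) have f_int: "set_integrable lborel {0<..} f" and f'_int: "set_integrable lborel {0<..} f'"
    unfolding set_integrable_def by (simp_all add: integrable_mult_indicator)
  note pos = set_integral_dual_intertwining_half_cis[OF assms(1) f_meas f_int, of lam]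
  note neg = set_integral_dual_intertwining_half_cis[OF assms(1) f'_meas f'_int, of "- lam"]
  have "kummer_transform \<kappa> f lam
      = (LINT x:{0<..}|lborel. f x * kummerM \<kappa> (\<i> * complex_of_real (lam * x)))
      + (LINT x:{0<..}|lborel. f' x * kummerM \<kappa> (\<i> * complex_of_real (- lam * x)))"
    using lborel_integral_split_reflect(2)[of "\<lambda>x. f x * kummerM \<kappa> (\<i> * complex_of_real (lam * x))"] pos(2) neg(2)
    unfolding kummer_transform_def f'_def by simp
  also have "\<dots> = (LINT x:{0<..}|lborel. dual_intertwining_half \<kappa> f x * cis (lam * x))
      + (LINT x:{0<..}|lborel. dual_intertwining_half \<kappa> f' x * cis (- lam * x))"
    using pos(3) neg(3) by simp
  also have "\<dots> = fourier_transform (dual_intertwining \<kappa> f) lam"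
    using fourier_transform_dual_intertwining_split pos(1) neg(1) unfolding f'_def by simp
  finally show ?thesis .
qed

lemma test_function_continuous: "test_function f \<Longrightarrow> continuous_on UNIV f"
  unfolding test_function_def
  by (metis continuous_at_imp_continuous_on differentiable_imp_continuous_within vderiv_iter.simps(1))

lemma test_function_integrable:
  assumes "test_function f"
  shows "integrable lborel f"
proof -
  let ?S = "closure {x. f x \<noteq> 0}"
  have "integrable lborel (\<lambda>x. indicator ?S x *\<^sub>R f x)"
    using assms test_function_continuous[OF assms]
    unfolding test_function_def by (intro borel_integrable_compact) (auto intro: continuous_on_subset)
  moreover have "indicator ?S x *\<^sub>R f x = f x" for x
    using closure_subset[of "{x. f x \<noteq> 0}"] by (auto simp: indicator_def)
  ultimately show ?thesis
    by simp
qed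

theorem proposition5p3:
  fixes \<kappa> :: real and f :: "real \<Rightarrow> complex" and lam :: real
  assumes "\<kappa> > 0" and "test_function f"
  shows "kummer_transform \<kappa> f lam = fourier_transform (dual_intertwining \<kappa> f) lam"
proof (rule kummer_transform_eq_fourier_dual_intertwining[OF assms(1)])
  show "f \<in> borel_measurable borel"
    using test_function_continuous[OF assms(2)] by (rule borel_measurable_continuous_onI)
  show "integrable lborel f"
    using assms(2) by (rule test_function_integrable)
qed

end
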